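(* Let $(G,\varphi)$ be a complex unit gain graph whose underlying graph $G$ has order $n$. Then $$2n-2c(G)-2\alpha(G)\le r(G,\varphi)\le 2n-2\alpha(G).$$
   Context: All graphs are simple and finite. A complex unit gain graph $(G,\varphi)$ consists of a simple graph $G$ with vertex set $\{v_1,\dots,v_n\}$ and a gain function $\varphi$ assigning to each oriented edge $e_{ij}$ (from $v_i$ to $v_j$, for each edge $v_iv_j$ of $G$) a complex number $\varphi(e_{ij})$ with $|\varphi(e_{ij})|=1$, such that $\varphi(e_{ji})=\varphi(e_{ij})^{-1}=\overline{\varphi(e_{ij})}$. Its adjacency matrix $A(G,\varphi)=(a_{ij})$ is the $n\times n$ Hermitian matrix with $a_{ij}=\varphi(e_{ij})$ if $v_i$ and $v_j$ are adjacent and $a_{ij}=0$ otherwise; $r(G,\varphi)$ denotes the rank of $A(G,\varphi)$. $\alpha(G)$ is the independence number of $G$ (the maximum size of a set of pairwise non-adjacent vertices), and $c(G)=|E(G)|-|V(G)|+\omega(G)$ is the cyclomatic number of $G$, where $\omega(G)$ is the number of connected components of $G$. *)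

theory Defs
  imports "HOL-Analysis.Analysis"
begin

definition simple_graph :: "('v::finite \<Rightarrow> 'v \<Rightarrow> bool) \<Rightarrow> bool" where
  "simple_graph E \<longleftrightarrow> (\<forall>u v. E u v \<longrightarrow> E v u) \<and> (\<forall>v. \<not> E v v)"

definition unit_gain :: "('v::finite \<Rightarrow> 'v \<Rightarrow> bool) \<Rightarrow> ('v \<Rightarrow> 'v \<Rightarrow> complex) \<Rightarrow> bool" where
  "unit_gain E \<phi> \<longleftrightarrow> (\<forall>u v. E u v \<longrightarrow> norm (\<phi> u v) = 1 \<and> \<phi> v u = inverse (\<phi> u v))"

definition gain_adj :: "('v::finite \<Rightarrow> 'v \<Rightarrow> bool) \<Rightarrow> ('v \<Rightarrow> 'v \<Rightarrow> complex) \<Rightarrow> complex^'v^'v" where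
  "gain_adj E \<phi> = (\<chi> i j. if E i j then \<phi> i j else 0)"

definition independence_number :: "('v::finite \<Rightarrow> 'v \<Rightarrow> bool) \<Rightarrow> nat" where
  "independence_number E = Max {card S | S. \<forall>u\<in>S. \<forall>v\<in>S. \<not> E u v}"

definition num_edges :: "('v::finite \<Rightarrow> 'v \<Rightarrow> bool) \<Rightarrow> nat" where
  "num_edges E = card {{u, v} | u v. E u v}"

definition num_components :: "('v::finite \<Rightarrow> 'v \<Rightarrow> bool) \<Rightarrow> nat" where
  "num_components E = card (UNIV // {(u, v). E\<^sup>*\<^sup>* u v})"

definition cyclomatic :: "('v::finite \<Rightarrow> 'v \<Rightarrow> bool) \<Rightarrow> int" where
  "cyclomatic E = int (num_edges E) - int CARD('v) + int (num_components E)"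

end

theory Submission
  imports Defs
begin

text \<open>
  The lower bound is proved by induction on the number of non-isolated vertices. Deleting all
  edges at a vertex \<open>v\<close> (zeroing row and column \<open>v\<close> of the adjacency matrix) does not increase
  the rank, increases \<open>\<alpha>\<close> by at most one, and decreases the cyclomatic number by
  \<open>deg v - k\<close>, where \<open>k\<close> counts the components of \<open>G - v\<close> that meet the neighbourhood of \<open>v\<close>.
  Hence if \<open>v\<close> lies on a cycle, \<open>c\<close> drops by at least one and the bound passes from the smaller
  graph to \<open>G\<close>. Otherwise \<open>G\<close> is a forest and, unless it is edgeless, has a pendant vertex \<open>u\<close>
  with neighbour \<open>v\<close>; deleting the edges at \<open>u\<close> and \<open>v\<close> lowers the rank by at least two
  (rows \<open>u\<close> and \<open>v\<close> are independent of the remaining ones), raises \<open>\<alpha>\<close> by at most one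
  and does not raise \<open>c\<close>.

  For the upper bound, if \<open>S\<close> is independent then the adjacency matrix vanishes on \<open>S \<times> S\<close>,
  so its rows are spanned by the rows outside \<open>S\<close> and the unit vectors outside \<open>S\<close>.
\<close>

definition isolate :: "'v \<Rightarrow> ('v \<Rightarrow> 'v \<Rightarrow> bool) \<Rightarrow> 'v \<Rightarrow> 'v \<Rightarrow> bool" where
  "isolate v E = (\<lambda>a b. E a b \<and> a \<noteq> v \<and> b \<noteq> v)"

definition component :: "('v \<Rightarrow> 'v \<Rightarrow> bool) \<Rightarrow> 'v \<Rightarrow> 'v set" where
  "component E x = {y. E\<^sup>*\<^sup>* x y}"

definition neighbours :: "('v \<Rightarrow> 'v \<Rightarrow> bool) \<Rightarrow> 'v \<Rightarrow> 'v set" where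
  "neighbours E v = {w. E v w}"

definition non_isolated :: "('v \<Rightarrow> 'v \<Rightarrow> bool) \<Rightarrow> 'v set" where
  "non_isolated E = {v. \<exists>w. E v w}"

definition edge_set :: "('v \<Rightarrow> 'v \<Rightarrow> bool) \<Rightarrow> 'v set set" where
  "edge_set E = {{u, w} | u w. E u w}"

definition forest :: "('v \<Rightarrow> 'v \<Rightarrow> bool) \<Rightarrow> bool" where
  "forest E \<longleftrightarrow> (\<forall>v a b. E v a \<and> E v b \<and> a \<noteq> b \<longrightarrow> \<not> (isolate v E)\<^sup>*\<^sup>* a b)"

lemma finite_set_of_sets [simp]: "finite (X :: 'v::finite set set)"
  by (rule finite_subset[of _ UNIV]) auto

lemma simple_graph_sym: "simple_graph E \<Longrightarrow> E u v \<Longrightarrow> E v u"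
  by (simp add: simple_graph_def)

lemma simple_graph_irrefl: "simple_graph E \<Longrightarrow> E u v \<Longrightarrow> u \<noteq> v"
  by (auto simp: simple_graph_def)

lemma simple_graph_isolate: "simple_graph E \<Longrightarrow> simple_graph (isolate v E)"
  by (auto simp: simple_graph_def isolate_def)

lemma unit_gain_isolate: "unit_gain E \<phi> \<Longrightarrow> unit_gain (isolate v E) \<phi>"
  by (simp add: unit_gain_def isolate_def)

lemma rtranclp_isolate_le: "(isolate v E)\<^sup>*\<^sup>* a b \<Longrightarrow> E\<^sup>*\<^sup>* a b"
  by (rule mono_rtranclp[rule_format, of "isolate v E"]) (simp_all add: isolate_def)

lemma rtranclp_isolate_isolated: "(isolate v E)\<^sup>*\<^sup>* a b \<Longrightarrow> a = v \<longleftrightarrow> b = v"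
  by (induction rule: rtranclp_induct) (auto simp: isolate_def)

lemma rtranclp_isolate_avoiding:
  "E\<^sup>*\<^sup>* x y \<Longrightarrow> \<not> E\<^sup>*\<^sup>* x v \<Longrightarrow> (isolate v E)\<^sup>*\<^sup>* x y"
proof (induction rule: rtranclp_induct)
  case (step z w)
  then have "isolate v E z w"
    by (auto simp: isolate_def intro: rtranclp.rtrancl_into_rtrancl)
  with step show ?case
    by (meson rtranclp.rtrancl_into_rtrancl)
qed simp

lemma rtranclp_isolate_to_neighbour:
  assumes "simple_graph E" and "E\<^sup>*\<^sup>* y v" and "y \<noteq> v"
  shows "\<exists>a. E v a \<and> (isolate v E)\<^sup>*\<^sup>* y a"
  using assms(2,3)
proof (induction rule: converse_rtranclp_induct)
  case (step y z)
  show ?case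
  proof (cases "z = v")
    case True
    then show ?thesis
      using step simple_graph_sym[OF assms(1)] by blast
  next
    case False
    then have "isolate v E y z"
      using step by (simp add: isolate_def)
    with step False show ?thesis
      by (meson converse_rtranclp_into_rtranclp)
  qed
qed simp

lemma component_eq_iff:
  "simple_graph E \<Longrightarrow> component E x = component E y \<longleftrightarrow> E\<^sup>*\<^sup>* x y"
  unfolding component_def
  by (auto simp: set_eq_iff simple_graph_def symp_def
      intro: rtranclp_trans dest: symp_rtranclp[THEN sympD, rotated])

lemma num_components_eq_card_components: "num_components E = card (range (component E))"
  unfolding num_components_def
  by (rule arg_cong[where f=card]) (auto simp: quotient_def Image_def component_def)

lemma mem_component: "x \<in> component E x"
  by (simp add: component_def)

lemma component_isolate_self: "component (isolate v E) v = {v}"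
  by (auto simp: component_def dest: rtranclp_isolate_isolated)

lemma component_isolate_avoiding:
  "\<not> E\<^sup>*\<^sup>* y v \<Longrightarrow> component (isolate v E) y = component E y"
  by (auto simp: component_def intro: rtranclp_isolate_avoiding dest: rtranclp_isolate_le)

lemma components_isolate:
  assumes "simple_graph E"
  shows "range (component (isolate v E)) =
    (range (component E) - {component E v}) \<union> insert {v} (component (isolate v E) ` neighbours E v)"
    (is "_ = ?Q \<union> insert {v} ?K")
proof (rule equalityI[OF subsetI])
  fix X assume "X \<in> range (component (isolate v E))"
  then obtain y where X: "X = component (isolate v E) y"
    by auto
  consider "y = v" | "y \<noteq> v" "E\<^sup>*\<^sup>* y v" | "\<not> E\<^sup>*\<^sup>* y v"
    by blast
  then show "X \<in> ?Q \<union> insert {v} ?K"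
  proof cases
    case 1
    then show ?thesis
      using X by (simp add: component_isolate_self)
  next
    case 2
    then obtain a where "E v a" "(isolate v E)\<^sup>*\<^sup>* y a"
      using rtranclp_isolate_to_neighbour assms by blast
    then have "X = component (isolate v E) a"
      using X component_eq_iff[OF simple_graph_isolate[OF assms], of v y a] by simp
    moreover have "a \<in> neighbours E v"
      using \<open>E v a\<close> by (simp add: neighbours_def)
    ultimately show ?thesis
      by blast
  next
    case 3
    then have "X = component E y" "component E y \<noteq> component E v"
      using X component_isolate_avoiding[OF 3] component_eq_iff[OF assms, of y v] by simp_all
    then show ?thesis
      by blast
  qed
next
  have "component E y \<in> range (component (isolate v E))" if "component E y \<noteq> component E v" for y
  proof -
    have "\<not> E\<^sup>*\<^sup>* y v"
      using that component_eq_iff[OF assms, of y v] by simp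
    then show ?thesis
      by (metis component_isolate_avoiding rangeI)
  qed
  moreover have "{v} \<in> range (component (isolate v E))"
    by (metis component_isolate_self rangeI)
  ultimately show "?Q \<union> insert {v} ?K \<subseteq> range (component (isolate v E))"
    by blast
qed

lemma singleton_notin_components_isolate:
  assumes "simple_graph E"
  shows "{v} \<notin> component (isolate v E) ` neighbours E v"
proof
  assume "{v} \<in> component (isolate v E) ` neighbours E v"
  then obtain a where "E v a" "component (isolate v E) a = {v}"
    by (auto simp: neighbours_def)
  then show False
    using mem_component[of a "isolate v E"] simple_graph_irrefl[OF assms] by auto
qed

lemma components_isolate_disjoint:
  assumes "simple_graph E"
  shows "(range (component E) - {component E v}) \<inter>
    insert {v} (component (isolate v E) ` neighbours E v) = {}"
proof -
  have "X \<notin> insert {v} (component (isolate v E) ` neighbours E v)"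
    if X: "X = component E y" and y: "component E y \<noteq> component E v" for X y
  proof
    assume "X \<in> insert {v} (component (isolate v E) ` neighbours E v)"
    then obtain a where "a \<in> X" "E\<^sup>*\<^sup>* a v"
    proof (cases "X = {v}")
      case False
      then obtain a where "E v a" "X = component (isolate v E) a"
        using \<open>X \<in> _\<close> by (auto simp: neighbours_def)
      then show ?thesis
        using that mem_component[of a] simple_graph_sym[OF assms] by blast
    qed (use that in auto)
    then have "E\<^sup>*\<^sup>* y v"
      using X by (auto simp: component_def)
    then show False
      using y component_eq_iff[OF assms, of y v] by simp
  qed
  then show ?thesis
    by blast
qed

lemma num_components_isolate:
  assumes "simple_graph E"
  shows "num_components (isolate v E) =
    num_components E + card (component (isolate v E) ` neighbours E v)"
proof -
  let ?K = "component (isolate v E) ` neighbours E v"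
  let ?Q = "range (component E) - {component E v}"
  have "card (?Q \<union> insert {v} ?K) = card ?Q + card (insert {v} ?K)"
    using components_isolate_disjoint[OF assms] by (intro card_Un_disjoint finite_set_of_sets)
  also have "card (insert {v} ?K) = Suc (card ?K)"
    using singleton_notin_components_isolate[OF assms]
    by (intro card_insert_disjoint finite_set_of_sets)
  also have "card ?Q + Suc (card ?K) = card (range (component E)) + card ?K"
    using card_Suc_Diff1[OF finite_set_of_sets, of "component E v" "range (component E)"] by simp
  finally show ?thesis
    by (simp only: num_components_eq_card_components components_isolate[OF assms])
qed

lemma num_edges_eq_card_edge_set: "num_edges E = card (edge_set E)"
  by (simp add: num_edges_def edge_set_def)

lemma edge_set_isolate:
  assumes "simple_graph E"
  shows "edge_set E = edge_set (isolate v E) \<union> (\<lambda>w. {v, w}) ` neighbours E v"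
proof (rule equalityI[OF subsetI])
  fix e assume "e \<in> edge_set E"
  then obtain a b where e: "e = {a, b}" "E a b"
    by (auto simp: edge_set_def)
  consider "a = v" | "b = v" | "a \<noteq> v" "b \<noteq> v"
    by blast
  then show "e \<in> edge_set (isolate v E) \<union> (\<lambda>w. {v, w}) ` neighbours E v"
  proof cases
    case 2
    then have "E v a" "e = {v, a}"
      using e simple_graph_sym[OF assms] by auto
    then show ?thesis
      by (auto simp: neighbours_def)
  qed (use e in \<open>auto simp: edge_set_def neighbours_def isolate_def\<close>)
qed (auto simp: edge_set_def neighbours_def isolate_def)

lemma num_edges_isolate:
  assumes "simple_graph E"
  shows "num_edges E = num_edges (isolate v E) + card (neighbours E v)"
proof -
  have "v \<notin> e" if "e \<in> edge_set (isolate v E)" for e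
    using that by (auto simp: edge_set_def isolate_def)
  then have disjoint: "edge_set (isolate v E) \<inter> (\<lambda>w. {v, w}) ` neighbours E v = {}"
    by blast
  have "inj_on (\<lambda>w. {v, w}) (neighbours E v)"
    by (auto simp: inj_on_def neighbours_def doubleton_eq_iff dest: simple_graph_irrefl[OF assms])
  then show ?thesis
    unfolding num_edges_eq_card_edge_set edge_set_isolate[OF assms, of v]
    using card_Un_disjoint[OF finite_set_of_sets finite_set_of_sets disjoint] by (simp add: card_image)
qed

lemma cyclomatic_isolate:
  assumes "simple_graph E"
  shows "cyclomatic E = cyclomatic (isolate v E) + int (card (neighbours E v))
    - int (card (component (isolate v E) ` neighbours E v))"
  using num_edges_isolate[OF assms, of v] num_components_isolate[OF assms, of v]
  by (simp add: cyclomatic_def)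

lemma cyclomatic_isolate_le:
  assumes "simple_graph E"
  shows "cyclomatic (isolate v E) \<le> cyclomatic E"
  using cyclomatic_isolate[OF assms, of v] card_image_le[of "neighbours E v" "component (isolate v E)"]
  by simp

lemma cyclomatic_isolate_less:
  assumes "simple_graph E" and "E v a" "E v b" "a \<noteq> b" and "(isolate v E)\<^sup>*\<^sup>* a b"
  shows "cyclomatic (isolate v E) < cyclomatic E"
proof -
  have "component (isolate v E) a = component (isolate v E) b"
    using assms(5) component_eq_iff[OF simple_graph_isolate[OF assms(1)], of v a b] by simp
  then have "\<not> inj_on (component (isolate v E)) (neighbours E v)"
    using assms(2-4) by (auto simp: inj_on_def neighbours_def)
  then have "card (component (isolate v E) ` neighbours E v) < card (neighbours E v)"
    using card_image_le[of "neighbours E v" "component (isolate v E)"]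
      inj_on_iff_eq_card[of "neighbours E v" "component (isolate v E)"]
    by simp
  then show ?thesis
    using cyclomatic_isolate[OF assms(1), of v] by simp
qed

lemma component_isolated: "x \<notin> non_isolated E \<Longrightarrow> component E x = {x}"
  by (auto simp: component_def non_isolated_def elim: converse_rtranclpE)

lemma cyclomatic_edgeless:
  fixes E :: "'v::finite \<Rightarrow> 'v \<Rightarrow> bool"
  assumes "non_isolated E = {}"
  shows "cyclomatic E = 0"
proof -
  have "edge_set E = {}"
    using assms by (auto simp: edge_set_def non_isolated_def)
  moreover have "range (component E) = (\<lambda>x. {x}) ` UNIV"
    using assms component_isolated[of _ E] by auto
  moreover have "card ((\<lambda>x::'v. {x}) ` UNIV) = CARD('v)"
    by (rule card_image) (auto simp: inj_on_def)
  ultimately show ?thesis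
    by (simp add: cyclomatic_def num_components_eq_card_components num_edges_eq_card_edge_set)
qed

lemma card_non_isolated_isolate_less:
  fixes E :: "'v::finite \<Rightarrow> 'v \<Rightarrow> bool"
  assumes "v \<in> non_isolated E"
  shows "card (non_isolated (isolate v E)) < card (non_isolated E)"
proof -
  have "non_isolated (isolate v E) \<subset> non_isolated E"
    using assms by (auto simp: non_isolated_def isolate_def)
  then show ?thesis
    by (rule psubset_card_mono[OF finite])
qed

lemma forest_isolate:
  assumes "forest E"
  shows "forest (isolate w E)"
  unfolding forest_def
proof (intro allI impI notI)
  fix v a b
  assume edges: "isolate w E v a \<and> isolate w E v b \<and> a \<noteq> b"
    and path: "(isolate v (isolate w E))\<^sup>*\<^sup>* a b"
  have "isolate v (isolate w E) \<le> isolate v E"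
    by (auto simp: isolate_def)
  then have "(isolate v E)\<^sup>*\<^sup>* a b"
    using path by (metis rtranclp_mono predicate2D)
  then show False
    using assms edges by (auto simp: forest_def isolate_def)
qed

lemma cyclomatic_forest:
  fixes E :: "'v::finite \<Rightarrow> 'v \<Rightarrow> bool"
  assumes "simple_graph E" and "forest E"
  shows "cyclomatic E = 0"
  using assms
proof (induction "card (non_isolated E)" arbitrary: E rule: less_induct)
  case less
  show ?case
  proof (cases "non_isolated E = {}")
    case True
    then show ?thesis
      by (rule cyclomatic_edgeless)
  next
    case False
    then obtain v where v: "v \<in> non_isolated E"
      by auto
    have sg: "simple_graph (isolate v E)"
      using less.prems(1) by (rule simple_graph_isolate)
    have "cyclomatic (isolate v E) = 0"
      using less.hyps[OF card_non_isolated_isolate_less[OF v] sg forest_isolate[OF less.prems(2)]] .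
    moreover have "inj_on (component (isolate v E)) (neighbours E v)"
      using less.prems(2) component_eq_iff[OF sg]
      by (auto simp: inj_on_def forest_def neighbours_def)
    ultimately show ?thesis
      using cyclomatic_isolate[OF less.prems(1), of v] by (simp add: card_image)
  qed
qed

lemma handshake:
  fixes E :: "'v::finite \<Rightarrow> 'v \<Rightarrow> bool"
  assumes "simple_graph E"
  shows "(\<Sum>v\<in>UNIV. card (neighbours E v)) = 2 * num_edges E"
proof -
  let ?P = "{(a, b). E a b}" and ?edge = "\<lambda>(a, b). {a, b}"
  have "?P = (SIGMA v:UNIV. neighbours E v)"
    by (auto simp: neighbours_def)
  then have "(\<Sum>v\<in>UNIV. card (neighbours E v)) = card ?P"
    by simp
  also have "\<dots> = (\<Sum>e\<in>edge_set E. card {p \<in> ?P. ?edge p = e})"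
  proof -
    have "?edge ` ?P \<subseteq> edge_set E"
      by (auto simp: edge_set_def)
    from sum.group[OF finite finite_set_of_sets this, of "\<lambda>_. 1::nat"] show ?thesis
      by simp
  qed
  also have "\<dots> = (\<Sum>e\<in>edge_set E. 2)"
  proof (rule sum.cong)
    fix e assume "e \<in> edge_set E"
    then obtain a b where e: "e = {a, b}" "E a b"
      by (auto simp: edge_set_def)
    then have "{p \<in> ?P. ?edge p = e} = {(a, b), (b, a)}"
      using simple_graph_sym[OF assms] by (auto simp: doubleton_eq_iff)
    then show "card {p \<in> ?P. ?edge p = e} = 2"
      using simple_graph_irrefl[OF assms e(2)] by simp
  qed simp
  finally show ?thesis
    by (simp add: num_edges_eq_card_edge_set)
qed

lemma card_isolated_less_num_components:
  fixes E :: "'v::finite \<Rightarrow> 'v \<Rightarrow> bool"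
  assumes "simple_graph E" and "non_isolated E \<noteq> {}"
  shows "CARD('v) - card (non_isolated E) < num_components E"
proof -
  let ?S = "(\<lambda>x. {x}) ` (- non_isolated E)"
  obtain x w where "E x w"
    using assms(2) by (auto simp: non_isolated_def)
  then have "{x, w} \<subseteq> component E x" "x \<noteq> w"
    using simple_graph_irrefl[OF assms(1)] by (auto simp: component_def)
  then have "component E x \<notin> ?S"
    by auto
  moreover have "insert (component E x) ?S \<subseteq> range (component E)"
    using component_isolated[of _ E] by (auto intro: range_eqI[symmetric])
  then have "card (insert (component E x) ?S) \<le> num_components E"
    unfolding num_components_eq_card_components by (intro card_mono) simp_all
  moreover have "card ?S = CARD('v) - card (non_isolated E)"
    by (subst card_image) (auto simp: inj_on_def Compl_eq_Diff_UNIV card_Diff_subset)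
  ultimately show ?thesis
    by simp
qed

lemma forest_has_leaf:
  fixes E :: "'v::finite \<Rightarrow> 'v \<Rightarrow> bool"
  assumes "simple_graph E" and "forest E" and "non_isolated E \<noteq> {}"
  shows "\<exists>u. card (neighbours E u) = 1"
proof (rule ccontr)
  assume no_leaf: "\<nexists>u. card (neighbours E u) = 1"
  have "2 \<le> card (neighbours E v)" if "v \<in> non_isolated E" for v
  proof -
    have "neighbours E v \<noteq> {}"
      using that by (auto simp: non_isolated_def neighbours_def)
    then have "card (neighbours E v) \<noteq> 0"
      by simp
    moreover have "card (neighbours E v) \<noteq> 1"
      using no_leaf by blast
    ultimately show ?thesis
      by linarith
  qed
  then have "2 * card (non_isolated E) \<le> (\<Sum>v\<in>non_isolated E. card (neighbours E v))"
    using sum_mono[of "non_isolated E" "\<lambda>_. 2::nat"] by (simp add: mult.commute)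
  also have "\<dots> \<le> (\<Sum>v\<in>UNIV. card (neighbours E v))"
    by (rule sum_mono2) auto
  also have "\<dots> = 2 * num_edges E"
    by (rule handshake[OF assms(1)])
  finally have "card (non_isolated E) \<le> num_edges E"
    by simp
  moreover have "card (non_isolated E) \<le> CARD('v)"
    by (rule card_mono) auto
  ultimately have "1 \<le> cyclomatic E"
    using card_isolated_less_num_components[OF assms(1,3)] by (simp add: cyclomatic_def)
  then show False
    using cyclomatic_forest[OF assms(1,2)] by simp
qed

definition independent_set :: "('v \<Rightarrow> 'v \<Rightarrow> bool) \<Rightarrow> 'v set \<Rightarrow> bool" where
  "independent_set E S \<longleftrightarrow> (\<forall>u\<in>S. \<forall>v\<in>S. \<not> E u v)"

lemma independence_number_eq_Max: "independence_number E = Max {card S | S. independent_set E S}"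
  by (simp add: independence_number_def independent_set_def)

lemma finite_independent_cards: "finite {card S | S. independent_set E (S :: 'v::finite set)}"
  by (rule finite_subset[of _ "card ` UNIV"]) auto

lemma card_le_independence_number:
  fixes E :: "'v::finite \<Rightarrow> 'v \<Rightarrow> bool"
  assumes "independent_set E S"
  shows "card S \<le> independence_number E"
  unfolding independence_number_eq_Max using assms by (intro Max_ge finite_independent_cards) blast

lemma independence_number_attained:
  fixes E :: "'v::finite \<Rightarrow> 'v \<Rightarrow> bool"
  obtains S where "independent_set E S" and "card S = independence_number E"
proof -
  have "independent_set E {}"
    by (simp add: independent_set_def)
  then have "independence_number E \<in> {card S | S. independent_set E S}"
    unfolding independence_number_eq_Max by (intro Max_in finite_independent_cards) blast
  then show ?thesis
    using that by auto
qed

lemma independence_number_le_Suc: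
  fixes E E' :: "'v::finite \<Rightarrow> 'v \<Rightarrow> bool"
  assumes "\<And>S. independent_set E' S \<Longrightarrow> independent_set E (S - {v})"
  shows "independence_number E' \<le> independence_number E + 1"
proof -
  obtain S where S: "independent_set E' S" "card S = independence_number E'"
    by (rule independence_number_attained)
  have "card S \<le> card (S - {v}) + 1"
    by (cases "v \<in> S") (simp_all add: card_Diff_singleton_if)
  also have "card (S - {v}) \<le> independence_number E"
    by (rule card_le_independence_number[OF assms[OF S(1)]])
  finally show ?thesis
    using S(2) by simp
qed

lemma independence_number_isolate_le:
  fixes E :: "'v::finite \<Rightarrow> 'v \<Rightarrow> bool"
  shows "independence_number (isolate v E) \<le> independence_number E + 1"
  by (rule independence_number_le_Suc[where v=v]) (auto simp: independent_set_def isolate_def)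

lemma independence_number_isolate_pendant_le:
  fixes E :: "'v::finite \<Rightarrow> 'v \<Rightarrow> bool"
  assumes "simple_graph E" and "neighbours E u = {v}"
  shows "independence_number (isolate v (isolate u E)) \<le> independence_number E + 1"
proof (rule independence_number_le_Suc[where v=v])
  fix S assume S: "independent_set (isolate v (isolate u E)) S"
  have "\<not> E x y" if "x \<in> S - {v}" "y \<in> S - {v}" for x y
  proof
    assume "E x y"
    moreover have "x \<noteq> u" "y \<noteq> u"
      using that \<open>E x y\<close> assms simple_graph_sym[OF assms(1)] by (auto simp: neighbours_def)
    ultimately show False
      using S that by (auto simp: independent_set_def isolate_def)
  qed
  then show "independent_set E (S - {v})"
    by (simp add: independent_set_def)
qed

definition rank_lower_bound :: "('v::finite \<Rightarrow> 'v \<Rightarrow> bool) \<Rightarrow> int" where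
  "rank_lower_bound E = 2 * int CARD('v) - 2 * cyclomatic E - 2 * int (independence_number E)"

lemma rank_lower_bound_edgeless:
  fixes E :: "'v::finite \<Rightarrow> 'v \<Rightarrow> bool"
  assumes "non_isolated E = {}"
  shows "rank_lower_bound E \<le> 0"
proof -
  have "independent_set E UNIV"
    using assms by (auto simp: independent_set_def non_isolated_def)
  then have "CARD('v) \<le> independence_number E"
    by (rule card_le_independence_number)
  then show ?thesis
    using cyclomatic_edgeless[OF assms] by (simp add: rank_lower_bound_def)
qed

lemma rank_lower_bound_isolate_cycle:
  fixes E :: "'v::finite \<Rightarrow> 'v \<Rightarrow> bool"
  assumes "simple_graph E" and "E v a" "E v b" "a \<noteq> b" and "(isolate v E)\<^sup>*\<^sup>* a b"
  shows "rank_lower_bound E \<le> rank_lower_bound (isolate v E)"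
  using cyclomatic_isolate_less[OF assms] independence_number_isolate_le[of v E]
  by (simp add: rank_lower_bound_def)

lemma rank_lower_bound_isolate_pendant:
  fixes E :: "'v::finite \<Rightarrow> 'v \<Rightarrow> bool"
  assumes "simple_graph E" and "neighbours E u = {v}"
  shows "rank_lower_bound E \<le> rank_lower_bound (isolate v (isolate u E)) + 2"
  using cyclomatic_isolate_le[OF simple_graph_isolate[OF assms(1)], of v u]
    cyclomatic_isolate_le[OF assms(1), of u] independence_number_isolate_pendant_le[OF assms]
  by (simp add: rank_lower_bound_def)

definition clear_rows_cols :: "'n set \<Rightarrow> 'a::zero^'n^'n \<Rightarrow> 'a^'n^'n" where
  "clear_rows_cols S A = (\<chi> i j. if i \<in> S \<or> j \<in> S then 0 else A $ i $ j)"

lemma rank_clear_rows_cols_le: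
  fixes A :: "'a::field^'n^'n"
  shows "rank (clear_rows_cols S A) \<le> rank A"
proof -
  define D where "D = (\<lambda>x::'a^'n. \<chi> j. if j \<in> S then 0 else x $ j)"
  have lin: "Vector_Spaces.linear (*s) (*s) D"
    unfolding D_def by unfold_locales (auto simp: vec_eq_iff algebra_simps)
  have "row i (clear_rows_cols S A) = (if i \<in> S then 0 else D (row i A))" for i
    by (simp add: row_def clear_rows_cols_def D_def vec_eq_iff)
  then have "rows (clear_rows_cols S A) \<subseteq> insert 0 (D ` rows A)"
    by (auto simp: rows_def)
  then have "vec.dim (rows (clear_rows_cols S A)) \<le> vec.dim (insert 0 (D ` rows A))"
    by (rule vec.dim_subset)
  also have "\<dots> = vec.dim (D ` rows A)"
    by (simp add: vec.dim_insert vec.span_zero)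
  also have "\<dots> \<le> vec.dim (rows A)"
    by (rule vec.dim_image_le[OF lin])
  finally show ?thesis
    by (simp add: row_rank_def_gen)
qed

lemma rank_le_of_zero_block:
  fixes A :: "'a::field^'n^'n"
  assumes zero: "\<forall>i\<in>S. \<forall>j\<in>S. A $ i $ j = 0"
  shows "rank A \<le> 2 * (CARD('n) - card S)"
proof -
  define W where "W = (\<lambda>i. row i A) ` (- S) \<union> (\<lambda>j. axis j 1) ` (- S)"
  have "rows A \<subseteq> vec.span W"
  proof
    fix x assume "x \<in> rows A"
    then obtain i where x: "x = row i A"
      by (auto simp: rows_def)
    show "x \<in> vec.span W"
    proof (cases "i \<in> S")
      case False
      then show ?thesis
        by (auto simp: x W_def intro: vec.span_base)
    next
      case True
      have "x = (\<Sum>j\<in>UNIV. (x $ j) *s axis j 1)"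
        by (simp add: basis_expansion)
      also have "\<dots> = (\<Sum>j\<in>- S. (x $ j) *s axis j 1)"
        using True zero by (intro sum.mono_neutral_right) (auto simp: x row_def)
      also have "\<dots> \<in> vec.span W"
        by (intro vec.span_sum vec.span_scale vec.span_base) (auto simp: W_def)
      finally show ?thesis .
    qed
  qed
  then have "vec.dim (rows A) \<le> card W"
    by (rule vec.dim_le_card) (simp add: W_def)
  also have "\<dots> \<le> card (- S) + card (- S)"
    unfolding W_def by (intro card_Un_le[THEN order_trans] add_mono card_image_le) auto
  finally show ?thesis
    by (simp add: row_rank_def_gen Compl_eq_Diff_UNIV card_Diff_subset)
qed

lemma rank_clear_pendant:
  fixes A :: "'a::field^'n^'n"
  assumes "u \<noteq> v" and uv: "A $ u $ v \<noteq> 0" and vu: "A $ v $ u \<noteq> 0"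
    and row_u: "\<And>j. j \<noteq> v \<Longrightarrow> A $ u $ j = 0"
    and col_u: "\<And>i. i \<noteq> v \<Longrightarrow> A $ i $ u = 0"
  shows "rank (clear_rows_cols {u, v} A) + 2 \<le> rank A"
proof -
  let ?B = "clear_rows_cols {u, v} A"
  define Z where "Z k = {x::'a^'n. x $ k = 0}" for k
  have Z: "vec.subspace (Z k)" for k
    by (auto simp: vec.subspace_def Z_def)
  have rows_B: "rows ?B \<subseteq> Z u \<inter> Z v"
    by (auto simp: rows_def row_def clear_rows_cols_def Z_def)
  have "vec.span (rows ?B) \<subseteq> Z v"
    using rows_B by (intro vec.span_minimal Z) auto
  then have indep_u: "row u A \<notin> vec.span (rows ?B)"
    using uv by (auto simp: Z_def row_def)
  have "vec.span (insert (row u A) (rows ?B)) \<subseteq> Z u"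
    using rows_B row_u \<open>u \<noteq> v\<close> by (intro vec.span_minimal Z) (auto simp: Z_def row_def)
  then have indep_v: "row v A \<notin> vec.span (insert (row u A) (rows ?B))"
    using vu by (auto simp: Z_def row_def)
  have row_B: "row i ?B = row i A - (A $ i $ v / A $ u $ v) *s row u A" if "i \<notin> {u, v}" for i
    using that uv row_u col_u \<open>u \<noteq> v\<close> by (auto simp: vec_eq_iff row_def clear_rows_cols_def)
  have "rows ?B \<subseteq> vec.span (rows A)"
  proof
    fix x assume "x \<in> rows ?B"
    then obtain i where x: "x = row i ?B"
      by (auto simp: rows_def)
    have rows_A: "row k A \<in> vec.span (rows A)" for k
      by (auto simp: rows_def intro: vec.span_base)
    show "x \<in> vec.span (rows A)"
    proof (cases "i \<in> {u, v}")
      case True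
      then have "x = 0"
        by (auto simp: x row_def clear_rows_cols_def vec_eq_iff)
      then show ?thesis
        by (simp add: vec.span_zero)
    next
      case False
      then show ?thesis
        using rows_A by (simp add: x row_B vec.span_diff vec.span_scale)
    qed
  qed
  then have "insert (row v A) (insert (row u A) (rows ?B)) \<subseteq> vec.span (rows A)"
    by (auto simp: rows_def intro: vec.span_base)
  then have "vec.dim (insert (row v A) (insert (row u A) (rows ?B))) \<le> vec.dim (rows A)"
    by (rule vec.dim_mono)
  then show ?thesis
    using indep_u indep_v by (simp add: vec.dim_insert row_rank_def_gen)
qed

lemma gain_adj_isolate: "gain_adj (isolate v E) \<phi> = clear_rows_cols {v} (gain_adj E \<phi>)"
  by (simp add: gain_adj_def clear_rows_cols_def isolate_def vec_eq_iff)

lemma gain_adj_isolate_isolate: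
  "gain_adj (isolate v (isolate u E)) \<phi> = clear_rows_cols {u, v} (gain_adj E \<phi>)"
  by (auto simp: gain_adj_def clear_rows_cols_def isolate_def vec_eq_iff)

lemma gain_adj_eq_0_iff:
  assumes "unit_gain E \<phi>"
  shows "gain_adj E \<phi> $ i $ j = 0 \<longleftrightarrow> \<not> E i j"
proof -
  have "norm (\<phi> i j) = 1" if "E i j"
    using assms that by (simp add: unit_gain_def)
  then have "\<phi> i j \<noteq> 0" if "E i j"
    using that by force
  then show ?thesis
    by (simp add: gain_adj_def)
qed

lemma rank_gain_adj_isolate_pendant:
  assumes "simple_graph E" and "unit_gain E \<phi>" and "neighbours E u = {v}"
  shows "rank (gain_adj (isolate v (isolate u E)) \<phi>) + 2 \<le> rank (gain_adj E \<phi>)"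
  unfolding gain_adj_isolate_isolate
proof (rule rank_clear_pendant)
  have "E u v"
    using assms(3) by (simp add: neighbours_def set_eq_iff)
  then show "u \<noteq> v" "gain_adj E \<phi> $ u $ v \<noteq> 0" "gain_adj E \<phi> $ v $ u \<noteq> 0"
    using simple_graph_sym[OF assms(1)] simple_graph_irrefl[OF assms(1)]
    by (auto simp: gain_adj_eq_0_iff[OF assms(2)])
  show "gain_adj E \<phi> $ u $ j = 0" "gain_adj E \<phi> $ j $ u = 0" if "j \<noteq> v" for j
    using assms that simple_graph_sym[OF assms(1), of j u]
    by (auto simp: gain_adj_eq_0_iff neighbours_def set_eq_iff)
qed

lemma rank_gain_adj_upper_bound:
  fixes E :: "'v::finite \<Rightarrow> 'v \<Rightarrow> bool"
  shows "int (rank (gain_adj E \<phi>)) \<le> 2 * int CARD('v) - 2 * int (independence_number E)"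
proof -
  obtain S where S: "independent_set E S" "card S = independence_number E"
    by (rule independence_number_attained)
  then have "\<forall>i\<in>S. \<forall>j\<in>S. gain_adj E \<phi> $ i $ j = 0"
    by (simp add: independent_set_def gain_adj_def)
  then have "rank (gain_adj E \<phi>) \<le> 2 * (CARD('v) - card S)"
    by (rule rank_le_of_zero_block)
  moreover have "card S \<le> CARD('v)"
    by (rule card_mono) auto
  ultimately show ?thesis
    using S(2) by linarith
qed

lemma rank_lower_bound_le_rank:
  fixes E :: "'v::finite \<Rightarrow> 'v \<Rightarrow> bool"
  assumes "simple_graph E" and "unit_gain E \<phi>"
  shows "rank_lower_bound E \<le> int (rank (gain_adj E \<phi>))"
  using assms
proof (induction "card (non_isolated E)" arbitrary: E rule: less_induct)
  case less
  note simple = less.prems(1) and gain = less.prems(2)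
  consider "non_isolated E = {}" | "\<not> forest E" | "forest E" "non_isolated E \<noteq> {}"
    by blast
  then show ?case
  proof cases
    case 1
    then show ?thesis
      using rank_lower_bound_edgeless by fastforce
  next
    case 2
    then obtain v a b where cycle: "E v a" "E v b" "a \<noteq> b" "(isolate v E)\<^sup>*\<^sup>* a b"
      by (auto simp: forest_def)
    then have "card (non_isolated (isolate v E)) < card (non_isolated E)"
      by (intro card_non_isolated_isolate_less) (auto simp: non_isolated_def)
    note IH = less.hyps[OF this simple_graph_isolate[OF simple] unit_gain_isolate[OF gain]]
    have "rank (gain_adj (isolate v E) \<phi>) \<le> rank (gain_adj E \<phi>)"
      by (simp add: gain_adj_isolate rank_clear_rows_cols_le)
    then show ?thesis
      using IH rank_lower_bound_isolate_cycle[OF simple cycle] by linarith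
  next
    case 3
    obtain u where "card (neighbours E u) = 1"
      using forest_has_leaf[OF simple 3] by blast
    then obtain v where leaf: "neighbours E u = {v}"
      by (rule card_1_singletonE)
    let ?E2 = "isolate v (isolate u E)"
    have "card (non_isolated ?E2) \<le> card (non_isolated (isolate u E))"
      by (intro card_mono) (auto simp: non_isolated_def isolate_def)
    also have "\<dots> < card (non_isolated E)"
      using leaf by (intro card_non_isolated_isolate_less) (auto simp: non_isolated_def neighbours_def)
    finally have IH: "rank_lower_bound ?E2 \<le> int (rank (gain_adj ?E2 \<phi>))"
      using less.hyps simple_graph_isolate[OF simple_graph_isolate[OF simple]]
        unit_gain_isolate[OF unit_gain_isolate[OF gain]] by blast
    then show ?thesis
      using rank_gain_adj_isolate_pendant[OF simple gain leaf]
        rank_lower_bound_isolate_pendant[OF simple leaf] by linarith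
  qed
qed

theorem theorem1p1:
  fixes E :: "'v::finite \<Rightarrow> 'v \<Rightarrow> bool" and \<phi> :: "'v \<Rightarrow> 'v \<Rightarrow> complex"
  assumes "simple_graph E" and "unit_gain E \<phi>"
  shows "2 * int CARD('v) - 2 * cyclomatic E - 2 * int (independence_number E)
           \<le> int (rank (gain_adj E \<phi>)) \<and>
         int (rank (gain_adj E \<phi>)) \<le> 2 * int CARD('v) - 2 * int (independence_number E)"
  using rank_lower_bound_le_rank[OF assms] rank_gain_adj_upper_bound[of E \<phi>]
  by (simp add: rank_lower_bound_def)

end
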